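(* Let $T$ and $k$ be positive integers and let $p_1,\dots,p_k\in(0,1]$, with $q_i=1-p_i$. Consider blocks $i=1,\dots,k$, each of $T$ slots. In block $i$ the slot success indicators are i.i.d. Bernoulli$(p_i)$, and the blocks are independent. Block $0$ is a virtual block that is always successful; accordingly set $q_0=0$. Let $Z(i)$ indicate that block $i$ contains at least one success. On the event $Z(k)=1$, define the following quantities: - $\kappa\in\{1,\dots,k\}$, such that $k-\kappa$ is the most recent block before $k$ with $Z(k-\kappa)=1$; - $X_k$, the number of failure slots before the first success in block $k$. The peak age of information of the first successfully received input in block $k$ is $$\Delta^{\rm P}_{\kappa,k}=\kappa T+X_k+1.$$ Then $$\Theta^{\rm pa}_k:=\mathbb{E}[\Delta^{\rm P}_{\kappa,k}\mid Z(k)=1]=T\sum_{\kappa=1}^{k}\kappa(1-q_{k-\kappa}^T)\prod_{i=k-\kappa+1}^{k-1}q_i^T+\Big(\frac{q_k}{p_k}-\frac{Tq_k^T}{1-q_k^T}\Big)+1.$$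
   Context: Empty products equal $1$. The block-$0$ convention means block $0$ is always treated as a successful block, so $\kappa=k$ corresponds to no successful block among $1,\dots,k-1$. *)

theory Defs
  imports "HOL-Probability.Probability"
begin

text \<open>Outcome: omega (i,t) = True iff slot t (0 \<le> t < T) of block i (1 \<le> i \<le> k) is a success.
  All slots are independent, slot (i,t) is Bernoulli(p i).\<close>
definition block_pmf :: "nat \<Rightarrow> nat \<Rightarrow> (nat \<Rightarrow> real) \<Rightarrow> ((nat \<times> nat) \<Rightarrow> bool) pmf" where
  "block_pmf T k p = Pi_pmf ({1..k} \<times> {..<T}) False (\<lambda>(i, t). bernoulli_pmf (p i))"

definition Zblk :: "nat \<Rightarrow> ((nat \<times> nat) \<Rightarrow> bool) \<Rightarrow> nat \<Rightarrow> bool" where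
  "Zblk T \<omega> i \<longleftrightarrow> i = 0 \<or> (\<exists>t<T. \<omega> (i, t))"

definition kappa :: "nat \<Rightarrow> nat \<Rightarrow> ((nat \<times> nat) \<Rightarrow> bool) \<Rightarrow> nat" where
  "kappa T k \<omega> = (LEAST \<kappa>. 1 \<le> \<kappa> \<and> \<kappa> \<le> k \<and> Zblk T \<omega> (k - \<kappa>))"

definition Xk :: "nat \<Rightarrow> ((nat \<times> nat) \<Rightarrow> bool) \<Rightarrow> nat" where
  "Xk k \<omega> = (LEAST t. \<omega> (k, t))"

definition peak_aoi :: "nat \<Rightarrow> nat \<Rightarrow> ((nat \<times> nat) \<Rightarrow> bool) \<Rightarrow> real" where
  "peak_aoi T k \<omega> = real (kappa T k \<omega>) * real T + real (Xk k \<omega>) + 1"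

definition qq :: "(nat \<Rightarrow> real) \<Rightarrow> nat \<Rightarrow> real" where
  "qq p i = (if i = 0 then 0 else 1 - p i)"

end

theory Submission
  imports Defs
begin

text \<open>By linearity, the conditional expectation of \<open>\<kappa>T + X\<^sub>k + 1\<close> given \<open>Z(k)\<close> only
  needs the probabilities of the events \<open>\<kappa> = j \<and> Z(k)\<close> and \<open>X\<^sub>k = x \<and> Z(k)\<close>. Both reduce to
  events fixing some slots to failure and some to success, whose probability under the product
  of Bernoulli distributions is a product of factors \<open>q\<^sub>i\<close> and \<open>p\<^sub>i\<close>: the event
  \<open>\<kappa> > m \<and> Z(k)\<close> is the difference of "blocks \<open>k-m, \<dots>, k-1\<close> fail" and
  "blocks \<open>k-m, \<dots>, k\<close> fail", and \<open>\<kappa> = j\<close> is the difference of \<open>\<kappa> > j - 1\<close> and \<open>\<kappa> > j\<close>.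
  The always successful block \<open>0\<close> makes \<open>\<kappa> > k\<close> impossible, matching \<open>q\<^sub>0 = 0\<close>.
  Finally \<open>X\<^sub>k\<close> given \<open>Z(k)\<close> is a geometric variable truncated to \<open>{0..<T}\<close>.\<close>

lemma expectation_eq_sum_prob_preimage:
  fixes g :: "'b \<Rightarrow> real"
  assumes "finite S" and "h ` set_pmf M \<subseteq> S"
  shows "measure_pmf.expectation M (\<lambda>\<omega>. g (h \<omega>))
    = (\<Sum>y\<in>S. g y * measure_pmf.prob M {\<omega>. h \<omega> = y})"
proof -
  have "measure_pmf.expectation M (\<lambda>\<omega>. g (h \<omega>)) = measure_pmf.expectation (map_pmf h M) g"
    by simp
  also have "\<dots> = (\<Sum>y\<in>S. g y * pmf (map_pmf h M) y)"
    by (rule integral_measure_pmf_real) (use assms in auto)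
  finally show ?thesis
    by (simp add: pmf_map vimage_def)
qed

lemma measure_cond_pmf:
  assumes "set_pmf M \<inter> A \<noteq> {}"
  shows "measure_pmf.prob (cond_pmf M A) B
    = measure_pmf.prob M (A \<inter> B) / measure_pmf.prob M A"
  using assms by (simp add: cond_pmf.rep_eq emeasure_measure_pmf_not_zero)

lemma expectation_cond_pmf_eq_sum:
  fixes g :: "'b \<Rightarrow> real"
  assumes "finite S" and "h ` (set_pmf M \<inter> A) \<subseteq> S" and "set_pmf M \<inter> A \<noteq> {}"
  shows "measure_pmf.expectation (cond_pmf M A) (\<lambda>\<omega>. g (h \<omega>))
    = (\<Sum>y\<in>S. g y * (measure_pmf.prob M (A \<inter> {\<omega>. h \<omega> = y}) / measure_pmf.prob M A))"
  using assms by (simp add: expectation_eq_sum_prob_preimage measure_cond_pmf)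

lemma measure_Pi_bernoulli_pmf_pattern:
  assumes "finite D" and "F \<subseteq> D" and "S \<subseteq> D" and "F \<inter> S = {}"
    and p: "\<And>z. z \<in> D \<Longrightarrow> 0 \<le> p z \<and> p z \<le> 1"
  shows "measure_pmf.prob (Pi_pmf D False (\<lambda>z. bernoulli_pmf (p z)))
      {\<omega>. (\<forall>z\<in>F. \<not> \<omega> z) \<and> (\<forall>z\<in>S. \<omega> z)}
    = (\<Prod>z\<in>F. 1 - p z) * (\<Prod>z\<in>S. p z)"
proof -
  define B where "B z = (if z \<in> F then {False} else if z \<in> S then {True} else UNIV)" for z
  have "{\<omega>. (\<forall>z\<in>F. \<not> \<omega> z) \<and> (\<forall>z\<in>S. \<omega> z)} = Pi D B"
    using assms(2-4) by (auto simp: B_def Pi_def)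
  then have "measure_pmf.prob (Pi_pmf D False (\<lambda>z. bernoulli_pmf (p z)))
      {\<omega>. (\<forall>z\<in>F. \<not> \<omega> z) \<and> (\<forall>z\<in>S. \<omega> z)}
    = (\<Prod>z\<in>D. if z \<in> F then 1 - p z else if z \<in> S then p z else 1)"
    unfolding \<open>_ = Pi D B\<close> measure_Pi_pmf_Pi[OF assms(1)]
    by (intro prod.cong refl) (use p in \<open>auto simp: B_def measure_pmf_single\<close>)
  also have "\<dots> = (\<Prod>z\<in>F. 1 - p z) * (\<Prod>z\<in>S. p z)"
  proof -
    have "D \<inter> F = F" "D \<inter> - F \<inter> S = S" using assms(2-4) by auto
    then show ?thesis using assms(1) by (simp add: prod.If_cases)
  qed
  finally show ?thesis .
qed

lemma truncated_geometric_mean: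
  fixes q :: real
  assumes "q \<noteq> 1" and "q ^ T \<noteq> 1"
  shows "(\<Sum>x<T. real x * (q ^ x * (1 - q) / (1 - q ^ T)))
    = q / (1 - q) - real T * q ^ T / (1 - q ^ T)"
proof -
  have "(\<Sum>x<n. real x * q ^ x * (1 - q)) = q * (1 - q ^ n) / (1 - q) - real n * q ^ n" for n
  proof (induction n)
    case (Suc n)
    then show ?case using assms(1) by (simp add: field_simps)
  qed simp
  then have "(\<Sum>x<T. real x * (q ^ x * (1 - q) / (1 - q ^ T)))
      = (q * (1 - q ^ T) / (1 - q) - real T * q ^ T) / (1 - q ^ T)"
    by (simp add: sum_divide_distrib[symmetric] mult.assoc)
  then show ?thesis
    using assms by (simp add: diff_divide_distrib)
qed

lemma block_pmf_eq_Pi_bernoulli_pmf: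
  "block_pmf T k p = Pi_pmf ({1..k} \<times> {..<T}) False (\<lambda>z. bernoulli_pmf (p (fst z)))"
  unfolding block_pmf_def by (simp add: case_prod_beta')

lemma finite_set_pmf_block_pmf: "finite (set_pmf (block_pmf T k p))"
  unfolding block_pmf_def
  by (rule finite_subset[OF set_Pi_pmf_subset']) auto

lemma kappa_bounds:
  assumes "k > 0"
  shows "1 \<le> kappa T k \<omega> \<and> kappa T k \<omega> \<le> k \<and> Zblk T \<omega> (k - kappa T k \<omega>)"
  unfolding kappa_def by (rule LeastI[of _ k]) (use assms in \<open>auto simp: Zblk_def\<close>)

lemma less_kappa_iff:
  assumes "k > 0" and "m \<le> k"
  shows "m < kappa T k \<omega> \<longleftrightarrow> (\<forall>i\<in>{k-m..<k}. \<not> Zblk T \<omega> i)"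
proof
  assume "m < kappa T k \<omega>"
  show "\<forall>i\<in>{k-m..<k}. \<not> Zblk T \<omega> i"
  proof (intro ballI notI)
    fix i assume i: "i \<in> {k-m..<k}" and "Zblk T \<omega> i"
    then have "1 \<le> k - i \<and> k - i \<le> k \<and> Zblk T \<omega> (k - (k - i))" by auto
    then have "kappa T k \<omega> \<le> k - i" unfolding kappa_def by (rule Least_le)
    with i \<open>m < kappa T k \<omega>\<close> show False by auto
  qed
next
  assume fail: "\<forall>i\<in>{k-m..<k}. \<not> Zblk T \<omega> i"
  show "m < kappa T k \<omega>"
  proof (rule ccontr)
    assume "\<not> m < kappa T k \<omega>"
    then have "k - kappa T k \<omega> \<in> {k-m..<k}"
      using kappa_bounds[OF assms(1), of T \<omega>] by auto
    then show False using fail kappa_bounds[OF assms(1), of T \<omega>] by blast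
  qed
qed

lemma Xk_less:
  assumes "k > 0" and "Zblk T \<omega> k"
  shows "Xk k \<omega> < T"
proof -
  obtain t where "t < T" "\<omega> (k, t)" using assms by (auto simp: Zblk_def)
  then show ?thesis unfolding Xk_def using Least_le[of "\<lambda>t. \<omega> (k, t)" t] by simp
qed

lemma Zblk_Xk_eq_iff:
  assumes "k > 0" and "x < T"
  shows "Zblk T \<omega> k \<and> Xk k \<omega> = x \<longleftrightarrow> (\<forall>t<x. \<not> \<omega> (k, t)) \<and> \<omega> (k, x)"
proof
  assume "Zblk T \<omega> k \<and> Xk k \<omega> = x"
  then obtain t where "\<omega> (k, t)" and "Xk k \<omega> = x" using assms by (auto simp: Zblk_def)
  then show "(\<forall>t<x. \<not> \<omega> (k, t)) \<and> \<omega> (k, x)"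
    unfolding Xk_def using LeastI[of "\<lambda>t. \<omega> (k, t)"] not_less_Least by blast
next
  assume "(\<forall>t<x. \<not> \<omega> (k, t)) \<and> \<omega> (k, x)"
  then show "Zblk T \<omega> k \<and> Xk k \<omega> = x"
    using assms unfolding Zblk_def Xk_def by (auto intro!: Least_equality simp: not_less[symmetric])
qed

context
  fixes T k :: nat and p :: "nat \<Rightarrow> real"
  assumes T: "T > 0" and k: "k > 0" and p: "\<forall>i\<in>{1..k}. 0 < p i \<and> p i \<le> 1"
begin

lemma prob_blocks_fail:
  assumes "I \<subseteq> {1..k}"
  shows "measure_pmf.prob (block_pmf T k p) {\<omega>. \<forall>i\<in>I. \<not> Zblk T \<omega> i}
    = (\<Prod>i\<in>I. qq p i ^ T)"
proof -
  have pattern: "{\<omega>. \<forall>i\<in>I. \<not> Zblk T \<omega> i}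
      = {\<omega>. (\<forall>z\<in>I \<times> {..<T}. \<not> \<omega> z) \<and> (\<forall>z\<in>{}. \<omega> z)}"
    using assms by (auto simp: Zblk_def)
  have "measure_pmf.prob (block_pmf T k p) {\<omega>. \<forall>i\<in>I. \<not> Zblk T \<omega> i}
      = (\<Prod>z\<in>I \<times> {..<T}. 1 - p (fst z))"
    unfolding pattern block_pmf_eq_Pi_bernoulli_pmf
    by (subst measure_Pi_bernoulli_pmf_pattern) (use p assms in \<open>auto simp: less_imp_le\<close>)
  also have "\<dots> = (\<Prod>i\<in>I. qq p i ^ T)"
    using assms by (auto simp: prod.cartesian_product' qq_def intro!: prod.cong)
  finally show ?thesis .
qed

lemma prob_Zblk_Xk_eq:
  assumes "x < T"
  shows "measure_pmf.prob (block_pmf T k p) {\<omega>. Zblk T \<omega> k \<and> Xk k \<omega> = x}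
    = qq p k ^ x * p k"
proof -
  have pattern: "{\<omega>. Zblk T \<omega> k \<and> Xk k \<omega> = x}
      = {\<omega>. (\<forall>z\<in>{k} \<times> {..<x}. \<not> \<omega> z) \<and> (\<forall>z\<in>{(k, x)}. \<omega> z)}"
    using Zblk_Xk_eq_iff[OF k assms] by auto
  have "measure_pmf.prob (block_pmf T k p) {\<omega>. Zblk T \<omega> k \<and> Xk k \<omega> = x}
      = (\<Prod>z\<in>{k} \<times> {..<x}. 1 - p (fst z)) * p k"
    unfolding pattern block_pmf_eq_Pi_bernoulli_pmf
    by (subst measure_Pi_bernoulli_pmf_pattern) (use p k assms in \<open>auto simp: less_imp_le\<close>)
  then show ?thesis using k by (simp add: qq_def prod.cartesian_product')
qed

lemma prob_less_kappa_Zblk: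
  assumes "m \<le> k"
  shows "measure_pmf.prob (block_pmf T k p) {\<omega>. m < kappa T k \<omega> \<and> Zblk T \<omega> k}
    = (\<Prod>i\<in>{k-m..<k}. qq p i ^ T) * (1 - qq p k ^ T)"
proof (cases "m = k")
  case True
  then have "{\<omega>. m < kappa T k \<omega> \<and> Zblk T \<omega> k} = {}"
    using kappa_bounds[OF k] by (auto simp: not_less)
  moreover have "(\<Prod>i\<in>{k-m..<k}. qq p i ^ T) = 0"
    using True k T by (intro prod_zero) (auto simp: qq_def intro!: bexI[of _ 0])
  ultimately show ?thesis by (metis measure_empty mult_zero_left)
next
  case False
  let ?M = "block_pmf T k p"
  have diff: "{\<omega>. m < kappa T k \<omega> \<and> Zblk T \<omega> k}
      = {\<omega>. \<forall>i\<in>{k-m..<k}. \<not> Zblk T \<omega> i} - {\<omega>. \<forall>i\<in>insert k {k-m..<k}. \<not> Zblk T \<omega> i}"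
    using less_kappa_iff[OF k assms] by auto
  have "measure_pmf.prob ?M {\<omega>. m < kappa T k \<omega> \<and> Zblk T \<omega> k}
      = measure_pmf.prob ?M {\<omega>. \<forall>i\<in>{k-m..<k}. \<not> Zblk T \<omega> i}
        - measure_pmf.prob ?M {\<omega>. \<forall>i\<in>insert k {k-m..<k}. \<not> Zblk T \<omega> i}"
    unfolding diff by (rule measure_pmf.finite_measure_Diff) auto
  also have "\<dots> = (\<Prod>i\<in>{k-m..<k}. qq p i ^ T) - (\<Prod>i\<in>insert k {k-m..<k}. qq p i ^ T)"
    using assms False k by (subst (1 2) prob_blocks_fail) auto
  finally show ?thesis by (simp add: algebra_simps)
qed

lemma prob_Zblk_kappa_eq:
  assumes "j \<in> {1..k}"
  shows "measure_pmf.prob (block_pmf T k p) {\<omega>. Zblk T \<omega> k \<and> kappa T k \<omega> = j}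
    = (1 - qq p (k - j) ^ T) * (\<Prod>i=k-j+1..k-1. qq p i ^ T) * (1 - qq p k ^ T)"
proof -
  let ?M = "block_pmf T k p"
  have diff: "{\<omega>. Zblk T \<omega> k \<and> kappa T k \<omega> = j}
      = {\<omega>. j - 1 < kappa T k \<omega> \<and> Zblk T \<omega> k} - {\<omega>. j < kappa T k \<omega> \<and> Zblk T \<omega> k}"
    using assms by auto
  have "measure_pmf.prob ?M {\<omega>. Zblk T \<omega> k \<and> kappa T k \<omega> = j}
      = measure_pmf.prob ?M {\<omega>. j - 1 < kappa T k \<omega> \<and> Zblk T \<omega> k}
        - measure_pmf.prob ?M {\<omega>. j < kappa T k \<omega> \<and> Zblk T \<omega> k}"
    unfolding diff by (rule measure_pmf.finite_measure_Diff) auto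
  also have "\<dots> = (\<Prod>i\<in>{k-(j-1)..<k}. qq p i ^ T) * (1 - qq p k ^ T)
      - (\<Prod>i\<in>{k-j..<k}. qq p i ^ T) * (1 - qq p k ^ T)"
    using assms by (subst (1 2) prob_less_kappa_Zblk) auto
  also have "{k-j..<k} = insert (k - j) {k-(j-1)..<k}"
    using assms by auto
  also have "{k-(j-1)..<k} = {k-j+1..k-1}"
    using assms by auto
  finally show ?thesis by (simp add: algebra_simps)
qed

lemma prob_Zblk: "measure_pmf.prob (block_pmf T k p) {\<omega>. Zblk T \<omega> k} = 1 - qq p k ^ T"
  using prob_less_kappa_Zblk[of 0] kappa_bounds[OF k] by (simp add: Suc_le_eq)

lemma qq_k: "1 - qq p k = p k" "qq p k \<noteq> 1" "qq p k ^ T \<noteq> 1"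
proof -
  have "0 < p k" "p k \<le> 1" "qq p k = 1 - p k"
    using k p by (auto simp: qq_def)
  then show "1 - qq p k = p k" "qq p k \<noteq> 1" "qq p k ^ T \<noteq> 1"
    using T power_less_one_iff[of "qq p k" T] by auto
qed

lemma set_pmf_block_pmf_Int_Zblk: "set_pmf (block_pmf T k p) \<inter> {\<omega>. Zblk T \<omega> k} \<noteq> {}"
  using prob_Zblk qq_k(3) by (auto simp: measure_pmf_zero_iff[symmetric])

lemma expectation_kappa_cond_Zblk:
  "measure_pmf.expectation (cond_pmf (block_pmf T k p) {\<omega>. Zblk T \<omega> k}) (\<lambda>\<omega>. real (kappa T k \<omega>))
    = (\<Sum>j=1..k. real j * (1 - qq p (k - j) ^ T) * (\<Prod>i=k-j+1..k-1. qq p i ^ T))"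
  using kappa_bounds[OF k] set_pmf_block_pmf_Int_Zblk qq_k(3)
  by (subst expectation_cond_pmf_eq_sum[where S = "{1..k}"])
     (auto simp: Collect_conj_eq[symmetric] prob_Zblk_kappa_eq prob_Zblk intro!: sum.cong)

lemma expectation_Xk_cond_Zblk:
  "measure_pmf.expectation (cond_pmf (block_pmf T k p) {\<omega>. Zblk T \<omega> k}) (\<lambda>\<omega>. real (Xk k \<omega>))
    = qq p k / p k - real T * qq p k ^ T / (1 - qq p k ^ T)"
proof -
  have "measure_pmf.expectation (cond_pmf (block_pmf T k p) {\<omega>. Zblk T \<omega> k}) (\<lambda>\<omega>. real (Xk k \<omega>))
      = (\<Sum>x<T. real x * (qq p k ^ x * (1 - qq p k) / (1 - qq p k ^ T)))"
    using Xk_less[OF k] set_pmf_block_pmf_Int_Zblk qq_k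
    by (subst expectation_cond_pmf_eq_sum[where S = "{..<T}"])
       (auto simp: Collect_conj_eq[symmetric] prob_Zblk_Xk_eq prob_Zblk intro!: sum.cong)
  also have "\<dots> = qq p k / (1 - qq p k) - real T * qq p k ^ T / (1 - qq p k ^ T)"
    using qq_k by (intro truncated_geometric_mean) auto
  finally show ?thesis
    using qq_k by simp
qed

end

theorem theorem3:
  fixes T k :: nat and p :: "nat \<Rightarrow> real"
  assumes "T > 0" and "k > 0" and "\<forall>i\<in>{1..k}. 0 < p i \<and> p i \<le> 1"
  shows "measure_pmf.expectation (cond_pmf (block_pmf T k p) {\<omega>. Zblk T \<omega> k}) (peak_aoi T k)
    = real T * (\<Sum>\<kappa>=1..k. real \<kappa> * (1 - qq p (k - \<kappa>) ^ T) * (\<Prod>i=k-\<kappa>+1..k-1. qq p i ^ T))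
      + (qq p k / p k - real T * qq p k ^ T / (1 - qq p k ^ T)) + 1"
proof -
  let ?E = "measure_pmf.expectation (cond_pmf (block_pmf T k p) {\<omega>. Zblk T \<omega> k})"
  have "finite (set_pmf (cond_pmf (block_pmf T k p) {\<omega>. Zblk T \<omega> k}))"
    using set_pmf_block_pmf_Int_Zblk[OF assms] finite_set_pmf_block_pmf by simp
  then have "?E (peak_aoi T k)
      = real T * ?E (\<lambda>\<omega>. real (kappa T k \<omega>)) + ?E (\<lambda>\<omega>. real (Xk k \<omega>)) + 1"
    unfolding peak_aoi_def by (simp add: integrable_measure_pmf_finite mult.commute)
  then show ?thesis
    by (simp add: expectation_kappa_cond_Zblk[OF assms] expectation_Xk_cond_Zblk[OF assms])
qed

end
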